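(* Let $0<\alpha<1$, $\lambda>0$, $L>0$, $T>0$, $r\ge1$, and let $M,N$ be positive integers. For any data $f$ and $\phi$, the finite difference scheme $$\delta_t U_i^{n+\frac12}+{}_0^{FC}D_t^{\alpha,\lambda}U_i^{n+\frac12}=\delta_x^2U_i^{\bar n}-\tilde\delta_xU_i^{\bar n}+f_i^{n+\frac12},\quad 1\le i\le M-1,\ 0\le n\le N-1,$$ $$U_i^0=\phi(x_i),\ 1\le i\le M-1,\qquad U_0^n=U_M^n=0,\ 0\le n\le N,$$ has a unique solution $\{U_i^n\}$.
   Context: The scheme discretizes $u_t+{}_0^C D_t^{\alpha,\lambda}u=u_{xx}-u_x+f$ on $(0,L)\times(0,T]$, $u(x,0)=\phi(x)$, $u(0,t)=u(L,t)=0$. Grids: $h=L/M$, $x_i=ih$; $t_n=T(n/N)^r$, $\tau_n=t_n-t_{n-1}$, $t_{m+\frac12}=\frac12(t_m+t_{m+1})$; $f_i^{n+\frac12}=f(x_i,t_{n+\frac12})$. Difference operators: $\delta_tU_i^{n+\frac12}=(U_i^{n+1}-U_i^n)/\tau_{n+1}$, $\tilde\delta_xU_i^n=(U_{i+1}^n-U_{i-1}^n)/(2h)$, $\delta_x^2U_i^n=(U_{i+1}^n-2U_i^n+U_{i-1}^n)/h^2$, $\tilde\delta_xU_i^{\bar n}=\frac12(\tilde\delta_xU_i^{n+1}+\tilde\delta_xU_i^n)$, $\delta_x^2U_i^{\bar n}=\frac12(\delta_x^2U_i^{n+1}+\delta_x^2U_i^n)$. Fast operator: fix $\varepsilon>0$,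 a positive integer $N_{exp}$ and $s_i>0,\omega_i>0$ with $|t^{-1-\alpha}-\sum_{i=1}^{N_{exp}}\omega_ie^{-s_it}|\le\varepsilon$ on $[\tau_1,T]$. For $1\le m\le N-1$: $\lambda^1_{i,m}=\int_{t_{m-1}}^{t_m}e^{-(\lambda+s_i)(t_{m+\frac12}-s)}\frac{s-t_{m-1}}{\tau_m}ds$, $\lambda^2_{i,m}=\int_{t_{m-1}}^{t_m}e^{-(\lambda+s_i)(t_{m+\frac12}-s)}\frac{t_m-s}{\tau_m}ds$; $a_{j,n}=\alpha\sum_i\omega_ie^{-(\lambda+s_i)(t_{n+\frac12}-t_{n-j+\frac12})}\lambda^1_{i,n-j}$, $b_{j,n}=\alpha\sum_i\omega_ie^{-(\lambda+s_i)(t_{n+\frac12}-t_{n-j+\frac12})}\lambda^2_{i,n-j}$. For a sequence $v^0,\dots,v^N$ (here $v^n=U_i^n$ for fixed $i$): ${}_0^{FC}D_t^{\alpha,\lambda}v^{n+\frac12}=\frac{1}{\Gamma(1-\alpha)}\Big[\frac{v^n+v^{n+1}}{2(1-\alpha)(\tau_{n+1}/2)^\alpha}-\big(a_{0,n}+\frac{\alpha e^{-\lambda\tau_{n+1}/2}}{(1-\alpha)(\tau_{n+1}/2)^\alpha}\big)v^n-\sum_{l=1}^{n-1}(a_{n-l,n}+b_{n-1-l,n})v^l-\big(b_{n-1,n}+\frac{e^{-\lambda t_{n+\frac12}}}{t_{n+\frac12}^\alpha}\big)v^0\Big]$, with $a_{0,0}=b_{-1,0}:=0$ and empty sums $0$.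 *)

theory Defs
  imports "HOL-Analysis.Analysis"
begin

definition tg :: "real \<Rightarrow> nat \<Rightarrow> real \<Rightarrow> nat \<Rightarrow> real" where
  "tg T N r n = T * (real n / real N) powr r"

definition tau :: "real \<Rightarrow> nat \<Rightarrow> real \<Rightarrow> nat \<Rightarrow> real" where
  "tau T N r n = tg T N r n - tg T N r (n - 1)"

definition thalf :: "real \<Rightarrow> nat \<Rightarrow> real \<Rightarrow> nat \<Rightarrow> real" where
  "thalf T N r m = (tg T N r m + tg T N r (Suc m)) / 2"

definition lam1 :: "real \<Rightarrow> nat \<Rightarrow> real \<Rightarrow> real \<Rightarrow> real \<Rightarrow> nat \<Rightarrow> real" where
  "lam1 T N r lam sv m =
     integral {tg T N r (m - 1) .. tg T N r m}
       (\<lambda>x. exp (- (lam + sv) * (thalf T N r m - x)) * ((x - tg T N r (m - 1)) / tau T N r m))"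

definition lam2 :: "real \<Rightarrow> nat \<Rightarrow> real \<Rightarrow> real \<Rightarrow> real \<Rightarrow> nat \<Rightarrow> real" where
  "lam2 T N r lam sv m =
     integral {tg T N r (m - 1) .. tg T N r m}
       (\<lambda>x. exp (- (lam + sv) * (thalf T N r m - x)) * ((tg T N r m - x) / tau T N r m))"

definition acoef :: "real \<Rightarrow> real \<Rightarrow> real \<Rightarrow> nat \<Rightarrow> real \<Rightarrow> nat \<Rightarrow> (nat \<Rightarrow> real) \<Rightarrow> (nat \<Rightarrow> real)
    \<Rightarrow> nat \<Rightarrow> nat \<Rightarrow> real" where
  "acoef \<alpha> lam T N r Nexp \<omega> s j n =
     \<alpha> * (\<Sum>i = 1..Nexp. \<omega> i * exp (- (lam + s i) * (thalf T N r n - thalf T N r (n - j)))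
                          * lam1 T N r lam (s i) (n - j))"

definition bcoef :: "real \<Rightarrow> real \<Rightarrow> real \<Rightarrow> nat \<Rightarrow> real \<Rightarrow> nat \<Rightarrow> (nat \<Rightarrow> real) \<Rightarrow> (nat \<Rightarrow> real)
    \<Rightarrow> nat \<Rightarrow> nat \<Rightarrow> real" where
  "bcoef \<alpha> lam T N r Nexp \<omega> s j n =
     \<alpha> * (\<Sum>i = 1..Nexp. \<omega> i * exp (- (lam + s i) * (thalf T N r n - thalf T N r (n - j)))
                          * lam2 T N r lam (s i) (n - j))"

text \<open>Fast tempered Caputo operator applied to a sequence v at level n+1/2
  (a_{0,0} = b_{-1,0} = 0, empty sums are 0).\<close>

definition fastD :: "real \<Rightarrow> real \<Rightarrow> real \<Rightarrow> nat \<Rightarrow> real \<Rightarrow> nat \<Rightarrow> (nat \<Rightarrow> real) \<Rightarrow> (nat \<Rightarrow> real)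
    \<Rightarrow> (nat \<Rightarrow> real) \<Rightarrow> nat \<Rightarrow> real" where
  "fastD \<alpha> lam T N r Nexp \<omega> s v n =
     (1 / Gamma (1 - \<alpha>)) *
     ( (v n + v (n + 1)) / (2 * (1 - \<alpha>) * (tau T N r (n + 1) / 2) powr \<alpha>)
       - ((if n = 0 then 0 else acoef \<alpha> lam T N r Nexp \<omega> s 0 n)
          + \<alpha> * exp (- lam * tau T N r (n + 1) / 2) / ((1 - \<alpha>) * (tau T N r (n + 1) / 2) powr \<alpha>)) * v n
       - (\<Sum>l = 1..n - 1. (acoef \<alpha> lam T N r Nexp \<omega> s (n - l) n
                           + bcoef \<alpha> lam T N r Nexp \<omega> s (n - 1 - l) n) * v l)
       - ((if n = 0 then 0 else bcoef \<alpha> lam T N r Nexp \<omega> s (n - 1) n)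
          + exp (- lam * thalf T N r n) / (thalf T N r n) powr \<alpha>) * v 0 )"

definition scheme :: "real \<Rightarrow> real \<Rightarrow> real \<Rightarrow> real \<Rightarrow> nat \<Rightarrow> nat \<Rightarrow> real \<Rightarrow> nat \<Rightarrow> (nat \<Rightarrow> real)
    \<Rightarrow> (nat \<Rightarrow> real) \<Rightarrow> (real \<Rightarrow> real \<Rightarrow> real) \<Rightarrow> (real \<Rightarrow> real) \<Rightarrow> (nat \<Rightarrow> nat \<Rightarrow> real) \<Rightarrow> bool" where
  "scheme \<alpha> lam L T M N r Nexp \<omega> s f \<phi> U \<longleftrightarrow>
     (let h = L / real M; x = (\<lambda>i::nat. real i * h);
          dxt = (\<lambda>i n. (U (i + 1) n - U (i - 1) n) / (2 * h));
          dxx = (\<lambda>i n. (U (i + 1) n - 2 * U i n + U (i - 1) n) / h\<^sup>2)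
      in (\<forall>i. 1 \<le> i \<and> i \<le> M - 1 \<longrightarrow> (\<forall>n. n \<le> N - 1 \<longrightarrow>
            (U i (n + 1) - U i n) / tau T N r (n + 1)
            + fastD \<alpha> lam T N r Nexp \<omega> s (\<lambda>k. U i k) n
            = (dxx i (n + 1) + dxx i n) / 2 - (dxt i (n + 1) + dxt i n) / 2
              + f (x i) (thalf T N r n)))
       \<and> (\<forall>i. 1 \<le> i \<and> i \<le> M - 1 \<longrightarrow> U i 0 = \<phi> (x i))
       \<and> (\<forall>n. n \<le> N \<longrightarrow> U 0 n = 0 \<and> U M n = 0))"

end

(*
  Each time step of the scheme is a linear system for the new level W = U^{n+1} of the form
  p W_i - a (W_{i+1} - 2 W_i + W_{i-1}) + b (W_{i+1} - W_{i-1}) = g_i, W_0 = W_M = 0,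
  where p = 1/tau_{n+1} + kappa_n > 0 (kappa_n >= 0 being the weight of v^{n+1} in the fast
  operator), a = 1/(2h^2) and b = 1/(4h); the right-hand side g depends only on earlier levels.
  Multiplying by W_i and summing, the convection term telescopes to zero and the diffusion term
  becomes a sum of squares, so the homogeneous system only has the trivial solution.  Being square,
  the system is therefore uniquely solvable, and marching in time yields a unique solution.
*)
theory Submission
  imports Defs "Jordan_Normal_Form.Determinant"
begin

definition tridiag :: "real \<Rightarrow> real \<Rightarrow> real \<Rightarrow> (nat \<Rightarrow> real) \<Rightarrow> nat \<Rightarrow> real" where
  "tridiag p a b W i = p * W i - a * (W (i + 1) - 2 * W i + W (i - 1)) + b * (W (i + 1) - W (i - 1))"

lemma sum_mult_central_difference:
  fixes W :: "nat \<Rightarrow> real"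
  shows "(\<Sum>i = 1..m. W i * (W (i + 1) - W (i - 1))) = W m * W (m + 1) - W 0 * W 1"
  by (induction m) (auto simp: algebra_simps)

lemma sum_mult_second_difference:
  fixes W :: "nat \<Rightarrow> real"
  shows "(\<Sum>i = 1..m. W i * (2 * W i - W (i + 1) - W (i - 1))) =
    (\<Sum>i = 1..m + 1. (W i - W (i - 1))\<^sup>2) + W 0 * (W 1 - W 0) - W (m + 1) * (W (m + 1) - W m)"
  by (induction m) (auto simp: algebra_simps power2_eq_square)

lemma tridiag_energy:
  assumes "W 0 = 0" "W (Suc m) = 0"
  shows "(\<Sum>i = 1..m. W i * tridiag p a b W i) =
    p * (\<Sum>i = 1..m. (W i)\<^sup>2) + a * (\<Sum>i = 1..Suc m. (W i - W (i - 1))\<^sup>2)"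
proof -
  have "(\<Sum>i = 1..m. W i * tridiag p a b W i) =
      p * (\<Sum>i = 1..m. (W i)\<^sup>2) + a * (\<Sum>i = 1..m. W i * (2 * W i - W (i + 1) - W (i - 1)))
      + b * (\<Sum>i = 1..m. W i * (W (i + 1) - W (i - 1)))"
    by (simp add: tridiag_def sum_distrib_left sum.distrib[symmetric] algebra_simps power2_eq_square)
  with assms show ?thesis
    using sum_mult_central_difference[of W m] sum_mult_second_difference[of W m]
    by (simp del: sum.cl_ivl_Suc)
qed

lemma tridiag_kernel_trivial:
  assumes "0 < p" "0 \<le> a" "W 0 = 0" "W (Suc m) = 0"
    and "\<And>i. 1 \<le> i \<Longrightarrow> i \<le> m \<Longrightarrow> tridiag p a b W i = 0" "i \<le> Suc m"
  shows "W i = 0"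
proof -
  have "p * (\<Sum>i = 1..m. (W i)\<^sup>2) + a * (\<Sum>i = 1..Suc m. (W i - W (i - 1))\<^sup>2) = 0"
    using tridiag_energy[of W m p a b] assms by simp
  moreover have "0 \<le> (\<Sum>i = 1..Suc m. (W i - W (i - 1))\<^sup>2)"
    by (simp add: sum_nonneg)
  ultimately have "p * (\<Sum>i = 1..m. (W i)\<^sup>2) \<le> 0"
    using \<open>0 \<le> a\<close> by (smt (verit) mult_nonneg_nonneg)
  then have "(\<Sum>i = 1..m. (W i)\<^sup>2) = 0"
    using \<open>0 < p\<close> by (smt (verit) mult_pos_pos sum_nonneg zero_le_power2)
  then have "\<forall>i\<in>{1..m}. W i = 0"
    by (simp add: sum_nonneg_eq_0_iff)
  then show ?thesis
    using assms by (cases "i = 0 \<or> i = Suc m") auto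
qed

lemma mat_vec_solvable_of_trivial_kernel:
  fixes A :: "'a :: field mat"
  assumes A: "A \<in> carrier_mat n n"
    and kernel: "\<And>v. v \<in> carrier_vec n \<Longrightarrow> A *\<^sub>v v = 0\<^sub>v n \<Longrightarrow> v = 0\<^sub>v n"
    and y: "y \<in> carrier_vec n"
  shows "\<exists>x \<in> carrier_vec n. A *\<^sub>v x = y"
proof -
  have "det A \<noteq> 0"
    using kernel det_0_iff_vec_prod_zero[OF A] by blast
  then have "A \<in> Units (ring_mat TYPE('a) n ())"
    by (rule det_non_zero_imp_unit[OF A])
  then obtain B where B: "B \<in> carrier_mat n n" "A * B = 1\<^sub>m n"
    by (auto simp: Units_def ring_mat_def)
  then have "A *\<^sub>v (B *\<^sub>v y) = y"
    using A y by (simp add: assoc_mult_mat_vec[symmetric])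
  then show ?thesis
    using B y by (metis mult_mat_vec_carrier)
qed

lemma tridiag_sum:
  "tridiag p a b (\<lambda>i. \<Sum>j\<in>J. c j * E j i) i = (\<Sum>j\<in>J. c j * tridiag p a b (E j) i)"
  by (simp add: tridiag_def sum_distrib_left sum_subtractf[symmetric] sum.distrib[symmetric] algebra_simps)

lemma tridiag_diff:
  "tridiag p a b (\<lambda>i. V i - U i) i = tridiag p a b V i - tridiag p a b U i"
  by (simp add: tridiag_def algebra_simps)

definition tridiag_mat :: "real \<Rightarrow> real \<Rightarrow> real \<Rightarrow> nat \<Rightarrow> real mat" where
  "tridiag_mat p a b m = mat m m (\<lambda>(k, j). tridiag p a b (\<lambda>i. if i = Suc j then 1 else 0) (Suc k))"

definition interior_fun :: "nat \<Rightarrow> real vec \<Rightarrow> nat \<Rightarrow> real" where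
  "interior_fun m v i = (if 1 \<le> i \<and> i \<le> m then v $ (i - 1) else 0)"

lemma tridiag_mat_mult_vec:
  assumes "v \<in> carrier_vec m" "k < m"
  shows "(tridiag_mat p a b m *\<^sub>v v) $ k = tridiag p a b (interior_fun m v) (Suc k)"
proof -
  have "(\<Sum>j<m. v $ j * (if i = Suc j then 1 else 0)) = interior_fun m v i" for i
  proof -
    have "(\<Sum>j<m. v $ j * (if i = Suc j then 1 else 0)) = (\<Sum>j<m. if j = i - 1 \<and> 1 \<le> i then v $ j else 0)"
      by (rule sum.cong) auto
    then show ?thesis
      by (auto simp: interior_fun_def)
  qed
  then have "interior_fun m v = (\<lambda>i. \<Sum>j<m. v $ j * (if i = Suc j then 1 else 0))"
    by simp
  then show ?thesis
    using assms by (simp add: tridiag_mat_def scalar_prod_def tridiag_sum lessThan_atLeast0 mult.commute)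
qed

lemma tridiag_solvable:
  assumes "0 < p" "0 \<le> a"
  shows "\<exists>W. W 0 = 0 \<and> W (Suc m) = 0 \<and> (\<forall>i \<in> {1..m}. tridiag p a b W i = g i)"
proof -
  let ?A = "tridiag_mat p a b m"
  have A: "?A \<in> carrier_mat m m"
    by (simp add: tridiag_mat_def)
  have interior_eq: "tridiag p a b (interior_fun m v) i = (?A *\<^sub>v v) $ (i - 1)"
    if "v \<in> carrier_vec m" "i \<in> {1..m}" for v i
  proof -
    have "i - 1 < m" "Suc (i - 1) = i"
      using that(2) by auto
    then show ?thesis
      using tridiag_mat_mult_vec[OF that(1), of "i - 1" p a b] by simp
  qed
  have kernel: "v = 0\<^sub>v m" if v: "v \<in> carrier_vec m" "?A *\<^sub>v v = 0\<^sub>v m" for v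
  proof (rule eq_vecI)
    fix k assume "k < dim_vec (0\<^sub>v m)"
    then have "k < m" by simp
    have "interior_fun m v (Suc k) = 0"
    proof (rule tridiag_kernel_trivial[OF assms])
      show "interior_fun m v 0 = 0" "interior_fun m v (Suc m) = 0"
        by (simp_all add: interior_fun_def)
      show "Suc k \<le> Suc m"
        using \<open>k < m\<close> by simp
      fix i assume "1 \<le> i" "i \<le> m"
      then show "tridiag p a b (interior_fun m v) i = 0"
        using interior_eq[OF v(1)] v(2) by simp
    qed
    with \<open>k < m\<close> show "v $ k = 0\<^sub>v m $ k"
      by (simp add: interior_fun_def)
  qed (use v in simp)
  then obtain x where x: "x \<in> carrier_vec m" "?A *\<^sub>v x = vec m (\<lambda>k. g (Suc k))"
    using mat_vec_solvable_of_trivial_kernel[OF A kernel vec_carrier] by blast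
  show ?thesis
  proof (intro exI conjI ballI)
    fix i assume "i \<in> {1..m}"
    then show "tridiag p a b (interior_fun m x) i = g i"
      using x interior_eq by auto
  qed (simp_all add: interior_fun_def)
qed

definition fastD_top_coeff :: "real \<Rightarrow> real \<Rightarrow> nat \<Rightarrow> real \<Rightarrow> nat \<Rightarrow> real" where
  "fastD_top_coeff \<alpha> T N r n = 1 / (Gamma (1 - \<alpha>) * (2 * (1 - \<alpha>) * (tau T N r (Suc n) / 2) powr \<alpha>))"

lemma fastD_split_top:
  "fastD \<alpha> lam T N r Nexp \<omega> s v n =
     fastD_top_coeff \<alpha> T N r n * v (Suc n) + fastD \<alpha> lam T N r Nexp \<omega> s (v(Suc n := 0)) n"
proof -
  have "(\<Sum>l = 1..n - 1. (acoef \<alpha> lam T N r Nexp \<omega> s (n - l) n + bcoef \<alpha> lam T N r Nexp \<omega> s (n - 1 - l) n) * (v(Suc n := 0)) l)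
     = (\<Sum>l = 1..n - 1. (acoef \<alpha> lam T N r Nexp \<omega> s (n - l) n + bcoef \<alpha> lam T N r Nexp \<omega> s (n - 1 - l) n) * v l)"
    by (intro sum.cong) auto
  then show ?thesis
    unfolding fastD_def fastD_top_coeff_def by (simp add: add_divide_distrib algebra_simps)
qed

lemma fastD_cong:
  assumes "\<And>k. k \<le> Suc n \<Longrightarrow> v k = w k"
  shows "fastD \<alpha> lam T N r Nexp \<omega> s v n = fastD \<alpha> lam T N r Nexp \<omega> s w n"
proof -
  have "(\<Sum>l = 1..n - 1. (acoef \<alpha> lam T N r Nexp \<omega> s (n - l) n + bcoef \<alpha> lam T N r Nexp \<omega> s (n - 1 - l) n) * v l)
     = (\<Sum>l = 1..n - 1. (acoef \<alpha> lam T N r Nexp \<omega> s (n - l) n + bcoef \<alpha> lam T N r Nexp \<omega> s (n - 1 - l) n) * w l)"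
    using assms by (intro sum.cong) auto
  then show ?thesis
    unfolding fastD_def using assms[of 0] assms[of n] assms[of "Suc n"] by simp
qed

lemma fastD_top_coeff_nonneg: "\<alpha> < 1 \<Longrightarrow> 0 \<le> fastD_top_coeff \<alpha> T N r n"
  by (simp add: fastD_top_coeff_def)

lemma tau_Suc_pos:
  assumes "0 < T" "0 < N" "0 < r"
  shows "0 < tau T N r (Suc n)"
proof -
  have "(real n / real N) powr r < (real (Suc n) / real N) powr r"
    using assms by (intro powr_less_mono2) (auto simp: divide_strict_right_mono)
  then show ?thesis
    using assms by (simp add: tau_def tg_def)
qed

locale fast_scheme =
  fixes \<alpha> lam L T r :: real and M N Nexp :: nat and \<omega> s :: "nat \<Rightarrow> real"
    and f :: "real \<Rightarrow> real \<Rightarrow> real" and \<phi> :: "real \<Rightarrow> real"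
  assumes alpha_less_1: "\<alpha> < 1" and T_pos: "0 < T" and r_pos: "0 < r"
    and L_nonzero: "L \<noteq> 0" and M_pos: "0 < M" and N_pos: "0 < N"
begin

abbreviation h :: real where
  "h \<equiv> L / real M"

definition level_op :: "nat \<Rightarrow> (nat \<Rightarrow> real) \<Rightarrow> nat \<Rightarrow> real" where
  "level_op n = tridiag (1 / tau T N r (Suc n) + fastD_top_coeff \<alpha> T N r n) (1 / (2 * h\<^sup>2)) (1 / (4 * h))"

definition history_rhs :: "(nat \<Rightarrow> nat \<Rightarrow> real) \<Rightarrow> nat \<Rightarrow> nat \<Rightarrow> real" where
  "history_rhs U i n =
     U i n / tau T N r (Suc n) - fastD \<alpha> lam T N r Nexp \<omega> s ((U i)(Suc n := 0)) n
     + (U (i + 1) n - 2 * U i n + U (i - 1) n) / (2 * h\<^sup>2) - (U (i + 1) n - U (i - 1) n) / (4 * h)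
     + f (real i * h) (thalf T N r n)"

lemma history_rhs_cong:
  assumes "\<And>j k. j \<le> Suc i \<Longrightarrow> k \<le> n \<Longrightarrow> V j k = U j k"
  shows "history_rhs V i n = history_rhs U i n"
proof -
  have "fastD \<alpha> lam T N r Nexp \<omega> s ((V i)(Suc n := 0)) n = fastD \<alpha> lam T N r Nexp \<omega> s ((U i)(Suc n := 0)) n"
    using assms by (intro fastD_cong) auto
  then show ?thesis
    using assms by (simp add: history_rhs_def)
qed

lemma scheme_iff_level_ops:
  "scheme \<alpha> lam L T M N r Nexp \<omega> s f \<phi> U \<longleftrightarrow>
     (\<forall>i \<in> {1..M - 1}. \<forall>n < N. level_op n (\<lambda>j. U j (Suc n)) i = history_rhs U i n) \<and>
     (\<forall>i \<in> {1..M - 1}. U i 0 = \<phi> (real i * h)) \<and> (\<forall>n \<le> N. U 0 n = 0 \<and> U M n = 0)"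
proof -
  have step:
    "(U i (n + 1) - U i n) / tau T N r (n + 1) + fastD \<alpha> lam T N r Nexp \<omega> s (U i) n =
       ((U (i + 1) (n + 1) - 2 * U i (n + 1) + U (i - 1) (n + 1)) / h\<^sup>2
        + (U (i + 1) n - 2 * U i n + U (i - 1) n) / h\<^sup>2) / 2
       - ((U (i + 1) (n + 1) - U (i - 1) (n + 1)) / (2 * h) + (U (i + 1) n - U (i - 1) n) / (2 * h)) / 2
       + f (real i * h) (thalf T N r n)
     \<longleftrightarrow> level_op n (\<lambda>j. U j (Suc n)) i = history_rhs U i n"
    (is "?lhs = ?rhs \<longleftrightarrow> ?op = ?hist") for i n
  proof -
    have "tau T N r (Suc n) \<noteq> 0" "h \<noteq> 0"
      using tau_Suc_pos[OF T_pos N_pos r_pos, of n] L_nonzero M_pos by auto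
    then have "?lhs - ?rhs = ?op - ?hist"
      by (simp add: fastD_split_top[of _ _ _ _ _ _ _ _ "U i"] level_op_def tridiag_def history_rhs_def
          field_simps power2_eq_square)
    then show ?thesis
      by linarith
  qed
  show ?thesis
    using N_pos unfolding scheme_def Let_def step by (auto simp: less_eq_Suc_le)
qed

lemma level_op_coeffs:
  "0 < 1 / tau T N r (Suc n) + fastD_top_coeff \<alpha> T N r n" "0 \<le> 1 / (2 * h\<^sup>2)"
  using tau_Suc_pos[OF T_pos N_pos r_pos, of n] fastD_top_coeff_nonneg[OF alpha_less_1]
  by (auto intro: add_pos_nonneg)

lemma level_op_solvable: "\<exists>W. W 0 = 0 \<and> W M = 0 \<and> (\<forall>i \<in> {1..M - 1}. level_op n W i = g i)"
  using tridiag_solvable[OF level_op_coeffs(1)[of n] level_op_coeffs(2), of "M - 1"] M_pos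
  by (simp add: level_op_def)

lemma level_op_kernel_trivial:
  assumes "W 0 = 0" "W M = 0" "\<And>i. 1 \<le> i \<Longrightarrow> i \<le> M - 1 \<Longrightarrow> level_op n W i = 0" "i \<le> M"
  shows "W i = 0"
  by (rule tridiag_kernel_trivial[OF level_op_coeffs(1)[of n] level_op_coeffs(2), where m = "M - 1"])
    (use assms M_pos in \<open>simp_all add: level_op_def\<close>)

text \<open>Levels above \<open>n\<close> are masked so that the recursion visibly only uses earlier levels.\<close>

fun level :: "nat \<Rightarrow> nat \<Rightarrow> real" where
  "level 0 = (\<lambda>i. if i \<in> {1..M - 1} then \<phi> (real i * h) else 0)"
| "level (Suc n) = (SOME W. W 0 = 0 \<and> W M = 0 \<and>
     (\<forall>i \<in> {1..M - 1}. level_op n W i = history_rhs (\<lambda>j k. if k \<le> n then level k j else 0) i n))"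

lemma scheme_exists: "scheme \<alpha> lam L T M N r Nexp \<omega> s f \<phi> (\<lambda>i n. level n i)"
proof -
  have "level_op n (level (Suc n)) i = history_rhs (\<lambda>i n. level n i) i n" if "i \<in> {1..M - 1}" for i n
  proof -
    have "history_rhs (\<lambda>j k. if k \<le> n then level k j else 0) i n = history_rhs (\<lambda>i n. level n i) i n"
      by (rule history_rhs_cong) simp
    with someI_ex[OF level_op_solvable] that show ?thesis
      by simp
  qed
  moreover have "level n 0 = 0 \<and> level n M = 0" for n
    using someI_ex[OF level_op_solvable] by (cases n) auto
  ultimately show ?thesis
    unfolding scheme_iff_level_ops by auto
qed

lemma scheme_unique:
  assumes U: "scheme \<alpha> lam L T M N r Nexp \<omega> s f \<phi> U" and V: "scheme \<alpha> lam L T M N r Nexp \<omega> s f \<phi> V"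
    and "i \<le> M" "n \<le> N"
  shows "V i n = U i n"
proof -
  have "\<forall>k \<le> n. \<forall>i \<le> M. V i k = U i k" if "n \<le> N" for n
    using that
  proof (induction n)
    case 0
    have "V i 0 = U i 0" if "i \<le> M" for i
    proof (cases "i = 0 \<or> i = M")
      case True
      then show ?thesis
        using U V unfolding scheme_iff_level_ops by auto
    next
      case False
      with that have "i \<in> {1..M - 1}"
        by auto
      then show ?thesis
        using U V unfolding scheme_iff_level_ops by simp
    qed
    then show ?case
      by simp
  next
    case (Suc n)
    then have IH: "\<forall>k \<le> n. \<forall>i \<le> M. V i k = U i k"
      by simp
    have "V i (Suc n) = U i (Suc n)" if "i \<le> M" for i
    proof -
      have "(\<lambda>j. V j (Suc n) - U j (Suc n)) i = 0"
      proof (rule level_op_kernel_trivial[OF _ _ _ that])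
        show "V 0 (Suc n) - U 0 (Suc n) = 0" "V M (Suc n) - U M (Suc n) = 0"
          using U V Suc.prems unfolding scheme_iff_level_ops by simp_all
        fix j assume j: "1 \<le> j" "j \<le> M - 1"
        have "level_op n (\<lambda>j. V j (Suc n) - U j (Suc n)) j =
            level_op n (\<lambda>j. V j (Suc n)) j - level_op n (\<lambda>j. U j (Suc n)) j"
          by (simp add: level_op_def tridiag_diff)
        also have "\<dots> = history_rhs V j n - history_rhs U j n"
          using U V Suc.prems j unfolding scheme_iff_level_ops by simp
        also have "\<dots> = 0"
          using history_rhs_cong[of j n V U] IH j by fastforce
        finally show "level_op n (\<lambda>j. V j (Suc n) - U j (Suc n)) j = 0" .
      qed
      then show ?thesis
        by simp
    qed
    with IH show ?case
      by (metis le_Suc_eq)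
  qed
  with assms show ?thesis
    by blast
qed

end

theorem mainTheorem3:
  fixes \<alpha> lam L T r \<epsilon> :: real and M N Nexp :: nat
    and \<omega> s :: "nat \<Rightarrow> real"
    and f :: "real \<Rightarrow> real \<Rightarrow> real" and \<phi> :: "real \<Rightarrow> real"
  assumes "0 < \<alpha>" "\<alpha> < 1" "0 < lam" "0 < L" "0 < T" "1 \<le> r"
    and "0 < M" "0 < N"
    and "0 < \<epsilon>" "0 < Nexp"
    and "\<And>i. 1 \<le> i \<Longrightarrow> i \<le> Nexp \<Longrightarrow> 0 < s i \<and> 0 < \<omega> i"
    and "\<And>t. tau T N r 1 \<le> t \<Longrightarrow> t \<le> T \<Longrightarrow>
           \<bar>t powr (-1 - \<alpha>) - (\<Sum>i = 1..Nexp. \<omega> i * exp (- s i * t))\<bar> \<le> \<epsilon>"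
  shows "\<exists>U. scheme \<alpha> lam L T M N r Nexp \<omega> s f \<phi> U \<and>
             (\<forall>V. scheme \<alpha> lam L T M N r Nexp \<omega> s f \<phi> V \<longrightarrow>
                  (\<forall>i \<le> M. \<forall>n \<le> N. V i n = U i n))"
proof -
  interpret fast_scheme \<alpha> lam L T r M N Nexp \<omega> s f \<phi>
    using assms by unfold_locales auto
  show ?thesis
    using scheme_exists scheme_unique by blast
qed

end
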